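(* Let $A,c>0$ be constants. For $n=1,2,\dots$ let $N_n$ be an index set and for $k\in N_n$ let $\mathbf M_{k,n}\in\mathbb R^{n\times p_n}$, $S_{k,n}\subseteq\{1,\dots,p_n\}$ and $\boldsymbol\beta_{k,n}\in\mathbb R^{p_n}$; let $\lambda_n=A\sqrt{\log(p_n)/n}$. Suppose that for some $\xi>c$, $$\sup_{k\in N_n}\frac{|S_{k,n}|\sqrt{\log(p_n)^2/n}}{\kappa^2(\xi,S_{k,n},\mathbf M_{k,n})}\to0\quad\text{and}\quad\sup_{k\in N_n}\sqrt{\log(p_n)}\,\|(\boldsymbol\beta_{k,n})_{S_{k,n}^c}\|_1\to0.$$ Then there exists $\xi'>c$ such that for every $c_1>0$, $\sup_{k\in N_n}\sqrt{\log(p_n)}\,\mu(c_1\lambda_n,\xi',\boldsymbol\beta_{k,n},\mathbf M_{k,n})\to0$.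
   Context: With $\mathscr C(\xi,T)=\{\mathbf u\ne\mathbf0:\|\mathbf u_{T^c}\|_1\le\xi\|\mathbf u_T\|_1\}$, the compatibility factor is $\kappa(\xi,T,\mathbf M)=\inf\{(\|\mathbf M\mathbf u\|_2/\sqrt n)/(\|\mathbf u_T\|_1/|T|):\mathbf u\in\mathscr C(\xi,T)\}$. For $\xi>1$, $\lambda>0$, $\boldsymbol\beta\in\mathbb R^p$, $\mathbf M\in\mathbb R^{n\times p}$, $$\mu(\lambda,\xi,\boldsymbol\beta,\mathbf M)=(\xi+1)\min_{T\subseteq\{1,\dots,p\}}\inf_{0<\nu<1}\max\Big[\frac{\|\boldsymbol\beta_{T^c}\|_1}{\nu},\ \frac{\lambda|T|/\{2(1-\nu)\}}{\kappa^2\{(\xi+\nu)/(1-\nu),T,\mathbf M\}}\Big].$$ *)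

theory Defs
  imports "HOL-Analysis.Analysis"
begin

text \<open>Vectors in R^p are functions nat => real, indices 0..<p (the paper's 1..p);
  an n x p matrix is a function nat => nat => real, rows 0..<n, columns 0..<p.\<close>

definition l1_on :: "nat set \<Rightarrow> (nat \<Rightarrow> real) \<Rightarrow> real" where
  "l1_on T u = (\<Sum>i\<in>T. \<bar>u i\<bar>)"

definition mat_vec_norm2 :: "nat \<Rightarrow> nat \<Rightarrow> (nat \<Rightarrow> nat \<Rightarrow> real) \<Rightarrow> (nat \<Rightarrow> real) \<Rightarrow> real" where
  "mat_vec_norm2 n p M u = sqrt (\<Sum>i<n. (\<Sum>j<p. M i j * u j)\<^sup>2)"

definition cone :: "nat \<Rightarrow> real \<Rightarrow> nat set \<Rightarrow> (nat \<Rightarrow> real) set" where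
  "cone p \<xi> T = {u. (\<forall>i\<ge>p. u i = 0) \<and> u \<noteq> (\<lambda>_. 0) \<and>
       l1_on ({0..<p} - T) u \<le> \<xi> * l1_on T u}"

text \<open>Compatibility factor, valued in extended reals (infimum over an empty cone is +infinity).\<close>
definition kappa :: "nat \<Rightarrow> nat \<Rightarrow> real \<Rightarrow> nat set \<Rightarrow> (nat \<Rightarrow> nat \<Rightarrow> real) \<Rightarrow> ereal" where
  "kappa n p \<xi> T M = (INF u\<in>cone p \<xi> T.
      ereal ((mat_vec_norm2 n p M u / sqrt (real n)) / (l1_on T u / real (card T))))"

definition mu :: "nat \<Rightarrow> nat \<Rightarrow> real \<Rightarrow> real \<Rightarrow> (nat \<Rightarrow> real) \<Rightarrow> (nat \<Rightarrow> nat \<Rightarrow> real) \<Rightarrow> ereal" where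
  "mu n p lam \<xi> \<beta> M = ereal (\<xi> + 1) *
     (INF T\<in>{T. T \<subseteq> {0..<p}}. INF \<nu>\<in>{0<..<1::real}.
        max (ereal (l1_on ({0..<p} - T) \<beta> / \<nu>))
            (ereal (lam * real (card T) / (2 * (1 - \<nu>)))
               / (kappa n p ((\<xi> + \<nu>) / (1 - \<nu>)) T M)\<^sup>2))"

end

theory Submission
  imports Defs
begin

text \<open>Fix \<open>\<xi>' = (c + \<xi>)/2\<close> and a single \<open>\<nu> \<in> (0,1)\<close> with \<open>(\<xi>' + \<nu>)/(1 - \<nu>) \<le> \<xi>\<close>. Bounding the
  minimum in \<open>\<mu>\<close> by the choice \<open>T = S\<^sub>k\<^sub>,\<^sub>n\<close> and this \<open>\<nu>\<close>, and using that \<open>\<kappa>\<close> decreases in its cone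
  parameter, gives \<open>\<surd>log p \<cdot> \<mu> \<le> D \<cdot> max(\<surd>log p \<parallel>\<beta>\<^sub>S\<^sub>c\<parallel>\<^sub>1, |S| \<surd>(log\<^sup>2 p / n) / \<kappa>\<^sup>2(\<xi>,S,M))\<close>
  for a constant \<open>D\<close> depending only on \<open>c\<^sub>1 A\<close>, \<open>\<xi>'\<close> and \<open>\<nu>\<close>, because
  \<open>\<surd>log p \<cdot> \<lambda>\<^sub>n = A \<surd>(log\<^sup>2 p / n)\<close>. Both terms tend to zero uniformly in \<open>k\<close> by hypothesis.\<close>

lemma l1_on_nonneg: "0 \<le> l1_on T u"
  unfolding l1_on_def by (auto intro: sum_nonneg)

lemma kappa_nonneg: "0 \<le> kappa n p \<xi> T M"
  unfolding kappa_def
  by (rule INF_greatest)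
    (auto simp: mat_vec_norm2_def l1_on_def intro!: divide_nonneg_nonneg mult_nonneg_nonneg sum_nonneg)

lemma cone_mono: "\<xi>1 \<le> \<xi>2 \<Longrightarrow> cone p \<xi>1 T \<subseteq> cone p \<xi>2 T"
  unfolding cone_def
  by (auto elim!: order_trans intro!: mult_right_mono simp: l1_on_def sum_nonneg)

lemma kappa_antimono: "\<xi>1 \<le> \<xi>2 \<Longrightarrow> kappa n p \<xi>2 T M \<le> kappa n p \<xi>1 T M"
  unfolding kappa_def by (rule INF_superset_mono[OF cone_mono]) auto

lemma kappa_power2_antimono: "\<xi>1 \<le> \<xi>2 \<Longrightarrow> (kappa n p \<xi>2 T M)\<^sup>2 \<le> (kappa n p \<xi>1 T M)\<^sup>2"
  unfolding power2_eq_square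
  by (intro ereal_mult_mono kappa_antimono kappa_nonneg) auto

lemma mu_nonneg:
  assumes "\<xi> > -1"
  shows "0 \<le> mu n p L \<xi> \<beta> M"
  unfolding mu_def using assms
  by (intro ereal_0_le_mult INF_greatest order_trans[OF _ max.cobounded1])
    (auto intro!: divide_nonneg_nonneg l1_on_nonneg)

lemma mu_le_max:
  assumes "T \<subseteq> {0..<p}" "0 < \<nu>" "\<nu> < 1" "(\<xi>' + \<nu>) / (1 - \<nu>) \<le> \<xi>" "\<xi>' > -1" "L \<ge> 0"
  shows "mu n p L \<xi>' \<beta> M \<le> ereal (\<xi>' + 1) * max (ereal (l1_on ({0..<p} - T) \<beta> / \<nu>))
            (ereal (L * real (card T) / (2 * (1 - \<nu>))) / (kappa n p \<xi> T M)\<^sup>2)"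
proof -
  define y where "y = ereal (L * real (card T) / (2 * (1 - \<nu>)))"
  have "y / (kappa n p ((\<xi>' + \<nu>) / (1 - \<nu>)) T M)\<^sup>2 \<le> y / (kappa n p \<xi> T M)\<^sup>2"
    unfolding divide_ereal_def y_def using assms
    by (intro ereal_mult_left_mono ereal_inverse_antimono kappa_power2_antimono)
      (auto simp: kappa_nonneg)
  then have "(INF T\<in>{T. T \<subseteq> {0..<p}}. INF \<nu>\<in>{0<..<1::real}.
        max (ereal (l1_on ({0..<p} - T) \<beta> / \<nu>))
            (ereal (L * real (card T) / (2 * (1 - \<nu>)))
               / (kappa n p ((\<xi>' + \<nu>) / (1 - \<nu>)) T M)\<^sup>2))
     \<le> max (ereal (l1_on ({0..<p} - T) \<beta> / \<nu>)) (y / (kappa n p \<xi> T M)\<^sup>2)"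
    using assms unfolding y_def
    by (intro INF_lower2[of T] INF_lower2[of \<nu>] max.mono) auto
  then show ?thesis
    unfolding mu_def y_def using assms by (intro ereal_mult_left_mono) auto
qed

lemma ereal_mult_max_divide:
  assumes "s \<ge> 0"
  shows "ereal s * max (ereal x) (ereal y / K) = max (ereal (s * x)) (ereal (s * y) / K)"
proof -
  have div: "ereal s * (ereal y / K) = ereal (s * y) / K"
    unfolding divide_ereal_def by (simp add: mult.assoc[symmetric])
  show ?thesis
  proof (cases "ereal x \<le> ereal y / K")
    case True
    then have "ereal (s * x) \<le> ereal (s * y) / K"
      using ereal_mult_left_mono[OF True, of "ereal s"] assms div by simp
    then show ?thesis using True div by (simp add: max_def)
  next
    case False
    then have "ereal (s * y) / K \<le> ereal (s * x)"
      using ereal_mult_left_mono[of "ereal y / K" "ereal x" "ereal s"] assms div by simp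
    then show ?thesis using False div by (simp add: max_def)
  qed
qed

lemma ereal_max_mult_le:
  fixes a b :: ereal
  assumes "0 \<le> a" "0 \<le> b" "x \<ge> 0" "y \<ge> 0"
  shows "max (ereal x * a) (ereal y * b) \<le> ereal (max x y) * max a b"
  using assms by (intro max.boundedI ereal_mult_mono) (auto simp: le_max_iff_disj)

lemma ln_of_nat_nonneg: "0 \<le> ln (real m)"
  by (cases "m = 0") auto

lemma exists_cone_shrink:
  fixes \<xi>' \<xi> :: real
  assumes "-1 < \<xi>'" "\<xi>' < \<xi>"
  shows "\<exists>\<nu>. 0 < \<nu> \<and> \<nu> < 1 \<and> (\<xi>' + \<nu>) / (1 - \<nu>) \<le> \<xi>"
proof (intro exI conjI)
  let ?\<nu> = "(\<xi> - \<xi>') / (1 + \<xi>)"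
  show "0 < ?\<nu>" and "?\<nu> < 1" using assms by (auto simp: field_simps)
  have "1 - ?\<nu> = (1 + \<xi>') / (1 + \<xi>)" and "\<xi>' + ?\<nu> = \<xi> * (1 + \<xi>') / (1 + \<xi>)"
    using assms by (auto simp: field_simps)
  then show "(\<xi>' + ?\<nu>) / (1 - ?\<nu>) \<le> \<xi>" using assms by simp
qed

lemma sqrt_ln_mu_le:
  assumes "T \<subseteq> {0..<p}" "0 < \<nu>" "\<nu> < 1" "(\<xi>' + \<nu>) / (1 - \<nu>) \<le> \<xi>" "\<xi>' > -1" "a \<ge> 0"
  shows "ereal (sqrt (ln (real p))) * mu n p (a * sqrt (ln (real p) / real n)) \<xi>' \<beta> M
     \<le> ereal ((\<xi>' + 1) * max (1 / \<nu>) (a / (2 * (1 - \<nu>))))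
        * max (ereal (sqrt (ln (real p)) * l1_on ({0..<p} - T) \<beta>))
              (ereal (real (card T) * sqrt ((ln (real p))\<^sup>2 / real n)) / (kappa n p \<xi> T M)\<^sup>2)"
proof -
  define l where "l = ln (real p)"
  define L where "L = a * sqrt (l / real n)"
  define K where "K = (kappa n p \<xi> T M)\<^sup>2"
  define b where "b = ereal (sqrt l * l1_on ({0..<p} - T) \<beta>)"
  define q where "q = ereal (real (card T) * sqrt (l\<^sup>2 / real n)) / K"
  have l: "l \<ge> 0" unfolding l_def by (rule ln_of_nat_nonneg)
  have K: "K \<ge> 0" unfolding K_def power2_eq_square by (intro ereal_0_le_mult kappa_nonneg)
  have b: "b \<ge> 0" unfolding b_def using l by (simp add: l1_on_nonneg)
  have q: "q \<ge> 0"
    unfolding q_def divide_ereal_def using K by (intro ereal_0_le_mult inverse_ereal_ge0I) auto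
  have rate: "sqrt l * (L * real (card T) / (2 * (1 - \<nu>)))
      = a / (2 * (1 - \<nu>)) * (real (card T) * sqrt (l\<^sup>2 / real n))"
    unfolding L_def by (simp add: real_sqrt_mult[symmetric] power2_eq_square)
  have "ereal (sqrt l) * mu n p L \<xi>' \<beta> M
      \<le> ereal (sqrt l) * (ereal (\<xi>' + 1) * max (ereal (l1_on ({0..<p} - T) \<beta> / \<nu>))
            (ereal (L * real (card T) / (2 * (1 - \<nu>))) / K))"
    unfolding K_def L_def using assms l by (intro ereal_mult_left_mono mu_le_max) auto
  also have "\<dots> = ereal (\<xi>' + 1) * max (ereal (sqrt l * (l1_on ({0..<p} - T) \<beta> / \<nu>)))
            (ereal (sqrt l * (L * real (card T) / (2 * (1 - \<nu>)))) / K)"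
    using l
    by (simp only: mult.left_commute[of "ereal (sqrt l)"] ereal_mult_max_divide[OF real_sqrt_ge_zero])
  also have "\<dots> = ereal (\<xi>' + 1) * max (ereal (1 / \<nu>) * b) (ereal (a / (2 * (1 - \<nu>))) * q)"
    unfolding rate b_def q_def divide_ereal_def by (simp add: mult.assoc[symmetric])
  also have "\<dots> \<le> ereal (\<xi>' + 1) * (ereal (max (1 / \<nu>) (a / (2 * (1 - \<nu>)))) * max b q)"
    using assms b q by (intro ereal_mult_left_mono ereal_max_mult_le) auto
  also have "\<dots> = ereal ((\<xi>' + 1) * max (1 / \<nu>) (a / (2 * (1 - \<nu>)))) * max b q"
    by (metis mult.assoc times_ereal.simps(1))
  finally show ?thesis
    unfolding l_def L_def K_def b_def q_def .
qed

lemma SUP_tendsto_zero_dominated: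
  fixes f a b :: "nat \<Rightarrow> 'k \<Rightarrow> ereal"
  assumes nonneg: "\<And>n k. k \<in> N n \<Longrightarrow> 0 \<le> f n k"
    and dominated: "\<And>n k. k \<in> N n \<Longrightarrow> f n k \<le> ereal D * max (a n k) (b n k)"
    and "0 \<le> D"
    and a: "(\<lambda>n. SUP k\<in>N n. a n k) \<longlonglongrightarrow> 0"
    and b: "(\<lambda>n. SUP k\<in>N n. b n k) \<longlonglongrightarrow> 0"
  shows "(\<lambda>n. SUP k\<in>N n. f n k) \<longlonglongrightarrow> 0"
proof (rule tendsto_sandwich)
  show "\<forall>\<^sub>F n in sequentially. 0 \<le> (SUP k\<in>N n. f n k)"
  proof -
    have "\<forall>\<^sub>F n in sequentially. -1 < (SUP k\<in>N n. a n k)"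
      using a by (rule order_tendstoD) simp
    then show ?thesis
    proof eventually_elim
      case (elim n)
      then obtain k where "k \<in> N n" by (cases "N n = {}") auto
      then show ?case using nonneg by (intro SUP_upper2) auto
    qed
  qed
  have "(SUP k\<in>N n. f n k) \<le> ereal D * max (SUP k\<in>N n. a n k) (SUP k\<in>N n. b n k)" for n
    using \<open>0 \<le> D\<close>
    by (intro SUP_least order_trans[OF dominated] ereal_mult_left_mono max.mono SUP_upper) auto
  then show "\<forall>\<^sub>F n in sequentially.
      (SUP k\<in>N n. f n k) \<le> ereal D * max (SUP k\<in>N n. a n k) (SUP k\<in>N n. b n k)"
    by simp
  show "(\<lambda>n. ereal D * max (SUP k\<in>N n. a n k) (SUP k\<in>N n. b n k)) \<longlonglongrightarrow> 0"
    using tendsto_cmult_ereal[OF _ tendsto_max[OF a b], of D] by simp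
qed simp

theorem mainTheorem12:
  fixes A c \<xi> :: real
    and N :: "nat \<Rightarrow> 'k set"
    and p :: "nat \<Rightarrow> nat"
    and M :: "nat \<Rightarrow> 'k \<Rightarrow> nat \<Rightarrow> nat \<Rightarrow> real"
    and S :: "nat \<Rightarrow> 'k \<Rightarrow> nat set"
    and \<beta> :: "nat \<Rightarrow> 'k \<Rightarrow> nat \<Rightarrow> real"
    and lam :: "nat \<Rightarrow> real"
  assumes "A > 0" and "c > 0"
    and "\<And>n k. k \<in> N n \<Longrightarrow> S n k \<subseteq> {0..<p n}"
    and "\<And>n. lam n = A * sqrt (ln (real (p n)) / real n)"
    and "\<xi> > c"
    and "(\<lambda>n. SUP k\<in>N n. ereal (real (card (S n k)) * sqrt ((ln (real (p n)))\<^sup>2 / real n))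
              / (kappa n (p n) \<xi> (S n k) (M n k))\<^sup>2) \<longlonglongrightarrow> 0"
    and "(\<lambda>n. SUP k\<in>N n. ereal (sqrt (ln (real (p n))) * l1_on ({0..<p n} - S n k) (\<beta> n k)))
              \<longlonglongrightarrow> 0"
  shows "\<exists>\<xi>'>c. \<forall>c1>0. (\<lambda>n. SUP k\<in>N n.
            ereal (sqrt (ln (real (p n)))) * mu n (p n) (c1 * lam n) \<xi>' (\<beta> n k) (M n k))
          \<longlonglongrightarrow> 0"
proof (intro exI[of _ "(c + \<xi>) / 2"] conjI allI impI)
  let ?\<xi>' = "(c + \<xi>) / 2"
  show "?\<xi>' > c" using assms by simp
  obtain \<nu> where \<nu>: "0 < \<nu>" "\<nu> < 1" "(?\<xi>' + \<nu>) / (1 - \<nu>) \<le> \<xi>"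
    using exists_cone_shrink[of ?\<xi>' \<xi>] assms by auto
  fix c1 :: real assume "c1 > 0"
  show "(\<lambda>n. SUP k\<in>N n.
      ereal (sqrt (ln (real (p n)))) * mu n (p n) (c1 * lam n) ?\<xi>' (\<beta> n k) (M n k)) \<longlonglongrightarrow> 0"
  proof (rule SUP_tendsto_zero_dominated[OF _ _ _ assms(7,6),
        where D = "(?\<xi>' + 1) * max (1 / \<nu>) (c1 * A / (2 * (1 - \<nu>)))"])
    fix n k assume "k \<in> N n"
    then show "ereal (sqrt (ln (real (p n)))) * mu n (p n) (c1 * lam n) ?\<xi>' (\<beta> n k) (M n k)
        \<le> ereal ((?\<xi>' + 1) * max (1 / \<nu>) (c1 * A / (2 * (1 - \<nu>)))) * max
          (ereal (sqrt (ln (real (p n))) * l1_on ({0..<p n} - S n k) (\<beta> n k)))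
          (ereal (real (card (S n k)) * sqrt ((ln (real (p n)))\<^sup>2 / real n))
            / (kappa n (p n) \<xi> (S n k) (M n k))\<^sup>2)"
      using sqrt_ln_mu_le[OF assms(3) \<nu>, of k n "c1 * A"] assms \<open>c1 > 0\<close>
      by (simp add: mult.assoc)
    show "0 \<le> ereal (sqrt (ln (real (p n)))) * mu n (p n) (c1 * lam n) ?\<xi>' (\<beta> n k) (M n k)"
      using assms by (intro ereal_0_le_mult mu_nonneg) (auto simp: ln_of_nat_nonneg)
  next
    show "0 \<le> (?\<xi>' + 1) * max (1 / \<nu>) (c1 * A / (2 * (1 - \<nu>)))"
      using assms \<nu> by (auto simp: le_max_iff_disj)
  qed
qed

end
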